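(* For all formulas $\alpha,\beta,\delta$: (1) $\alpha\land\beta\vDash\alpha$ and $\alpha\land\beta\vDash\beta$; (2) if $\alpha\vDash\beta$ then $\alpha\land\delta\vDash\beta$; (3) $\lnot\lnot\alpha\equiv\alpha$; (4) if $\alpha\vDash\beta$ then $\lnot\beta\vDash\lnot\alpha$; (5) $\mathbf f\vDash\beta$ and $\beta\vDash\mathbf t$.
   Context: Hilbert spaces and states: for $n\ge1$, $\mathcal H^{(n)}=(\mathbb C^2)^{\otimes n}$ with canonical basis $|x_1,\dots,x_n\rangle$ ($x_i\in\{0,1\}$, $|0\rangle=(1,0)$, $|1\rangle=(0,1)$); $\mathfrak D(\mathcal H^{(n)})$ is the set of density operators (qumixes). A truth-perspective is a unitary $\mathfrak T$ on $\mathbb C^2$, $\mathfrak T^{(n)}=\mathfrak T^{\otimes n}$. $^{\mathfrak T}P_1^{(n)}$ (resp. $^{\mathfrak T}P_0^{(n)}$) is the projection onto the span of the $\mathfrak T^{(n)}|x_1,\dots,x_n\rangle$ with $x_n=1$ (resp. $0$). $\mathtt p_{\mathfrak T}(\rho)=\mathrm{tr}(^{\mathfrak T}P_1^{(n)}\rho)$, and $\rho\preceq_{\mathfrak T}\sigma$ iff $\mathtt p_{\mathfrak T}(\rho)\le\mathtt p_{\mathfrak T}(\sigma)$. $Red^{(j_1,\dots,j_s)}_{[n_1,\dots,n_t]}(\rho)$ is the reduced state of $\rho$ on factors $j_1,\dots,j_s$ of $\mathcal H^{(n_1)}\otimes\cdots\otimes\mathcal H^{(n_t)}$. Gates (canonical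 basis, extended linearly): $\mathtt{NOT}^{(n)}|x_1..x_n\rangle=|x_1..x_{n-1}\rangle\otimes|1-x_n\rangle$; $\sqrt{\mathtt I}^{(n)}|x_1..x_n\rangle=|x_1..x_{n-1}\rangle\otimes\frac1{\sqrt2}((-1)^{x_n}|x_n\rangle+|1-x_n\rangle)$; $\sqrt{\mathtt{NOT}}^{(n)}|x_1..x_n\rangle=|x_1..x_{n-1}\rangle\otimes(\frac{1-i}2|x_n\rangle+\frac{1+i}2|1-x_n\rangle)$; $\mathtt{XOR}^{(m,n)}|x_1..x_m,y_1..y_n\rangle=|x_1..x_m,y_1..y_{n-1}\rangle\otimes|x_m\oplus y_n\rangle$; $\mathtt T^{(m,n,p)}|x_1..x_m,y_1..y_n,z_1..z_p\rangle=|x_1..x_m,y_1..y_n,z_1..z_{p-1}\rangle\otimes|x_my_n\oplus z_p\rangle$ ($\oplus$ addition mod 2). For a gate $G$ on $\mathcal H^{(n)}$: $G_{\mathfrak T}=\mathfrak T^{(n)}G\mathfrak T^{(n)\dagger}$, $^{\mathfrak D}G_{\mathfrak T}(\rho)=G_{\mathfrak T}\rho G_{\mathfrak T}^\dagger$. Language: formulas built from atomic formulas (including distinguished atoms $\mathbf t,\mathbf f$) with unary $\lnot,\sqrt{id},\sqrt\lnot$, binary $\uplus$, ternary $\intercal$; $\alpha\land\beta:=\intercal(\alpha,\beta,\mathbf f)$, $\alpha\lor\beta:=\lnot(\lnot\alpha\land\lnot\beta)$. $At(\alpha)$ = number of occurrences of atomic formulas in $\alpha$. Syntactical tree: $Level_1^\alpha=(\alpha)$;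 $Level_{i+1}^\alpha$ is obtained from $Level_i^\alpha=(\beta_1,\dots,\beta_r)$ by replacing each non-atomic $\beta_j$ by its immediate subformulas (arguments, in order) and keeping atomic $\beta_j$; the last level $Level_h^\alpha$ lists all atomic occurrences. $\mathcal H^{(At\alpha)}=\bigotimes_j\mathcal H^{(At\beta_j)}$. The $\mathfrak T$-gate $G^\alpha_{\mathfrak T(i)}$ ($1\le i<h$) is the tensor product over $j$ of: identity of $\mathbb C^2$ if $\beta_j$ atomic; $\mathtt{NOT}_{\mathfrak T}^{(At\beta)}$, $\sqrt{\mathtt I}_{\mathfrak T}^{(At\beta)}$, $\sqrt{\mathtt{NOT}}_{\mathfrak T}^{(At\beta)}$ for $\lnot\beta,\sqrt{id}\beta,\sqrt\lnot\beta$; $\mathtt{XOR}_{\mathfrak T}^{(At\beta',At\beta'')}$ for $\beta'\uplus\beta''$; $\mathtt T_{\mathfrak T}^{(At\beta',At\beta'',At\beta''')}$ for $\intercal(\beta',\beta'',\beta''')$. Holistic model: a map $\mathtt{Hol}_{\mathfrak T}$ assigning to each level $Level_i^\alpha$ of each formula $\alpha$ a qumix in $\mathfrak D(\mathcal H^{(At\alpha)})$ such that (a) $\mathtt{Hol}_{\mathfrak T}(Level_i^\alpha)={}^{\mathfrak D}G^\alpha_{\mathfrak T(i)}(\mathtt{Hol}_{\mathfrak T}(Level_{i+1}^\alpha))$ for $1\le i<h$; (b) (normality) for each $\gamma$, with the contextual meaning of the occurrence $\beta_j$ in $Level_i^\gamma=(\beta_1,\dots,\beta_r)$ defined as $Red^{(j)}_{[At\beta_1,\dots,At\beta_r]}(\mathtt{Hol}_{\mathfrak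 T}(Level_i^\gamma))$, all occurrences of the same subformula $\beta$ in the tree of $\gamma$ have the same contextual meaning, denoted $\mathtt{Hol}^\gamma_{\mathfrak T}(\beta)$; (c) every occurrence of $\mathbf f$ (resp. $\mathbf t$) has contextual meaning $^{\mathfrak T}P_0^{(1)}$ (resp. $^{\mathfrak T}P_1^{(1)}$). Logical consequence: $\alpha\vDash\beta$ iff for every truth-perspective $\mathfrak T$, every formula $\gamma$ having both $\alpha$ and $\beta$ as subformulas (a formula counts as a subformula of itself), and every holistic model $\mathtt{Hol}_{\mathfrak T}$, $\mathtt{Hol}^\gamma_{\mathfrak T}(\alpha)\preceq_{\mathfrak T}\mathtt{Hol}^\gamma_{\mathfrak T}(\beta)$. $\alpha\equiv\beta$ means $\alpha\vDash\beta$ and $\beta\vDash\alpha$. *)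

theory Defs
  imports Complex_Main
begin

section \<open>Operators on n qubits, indexed by canonical basis bit strings\<close>

text \<open>An operator on H^(n) = (C^2)^(tensor n) is represented by its matrix in the
canonical basis: A xs ys = <xs|A|ys>, for bit strings xs, ys of length n
(True = 1, False = 0).  All operators built below vanish off length-n strings.\<close>

type_synonym qop = "bool list \<Rightarrow> bool list \<Rightarrow> complex"

definition bits :: "nat \<Rightarrow> bool list set" where
  "bits n = {xs. length xs = n}"

definition mmult :: "nat \<Rightarrow> qop \<Rightarrow> qop \<Rightarrow> qop" where
  "mmult n A B = (\<lambda>x y. \<Sum>z\<in>bits n. A x z * B z y)"

definition adj :: "qop \<Rightarrow> qop" where
  "adj A = (\<lambda>x y. cnj (A y x))"

definition idop :: "nat \<Rightarrow> qop" where
  "idop n = (\<lambda>x y. if length x = n \<and> length y = n \<and> x = y then 1 else 0)"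

definition qtrace :: "nat \<Rightarrow> qop \<Rightarrow> complex" where
  "qtrace n A = (\<Sum>x\<in>bits n. A x x)"

definition density :: "nat \<Rightarrow> qop \<Rightarrow> bool" where
  "density n \<rho> \<longleftrightarrow>
     (\<forall>x y. (length x \<noteq> n \<or> length y \<noteq> n) \<longrightarrow> \<rho> x y = 0) \<and>
     adj \<rho> = \<rho> \<and>
     (\<forall>v::bool list \<Rightarrow> complex.
        Im (\<Sum>x\<in>bits n. \<Sum>y\<in>bits n. cnj (v x) * \<rho> x y * v y) = 0 \<and>
        0 \<le> Re (\<Sum>x\<in>bits n. \<Sum>y\<in>bits n. cnj (v x) * \<rho> x y * v y)) \<and>
     qtrace n \<rho> = 1"

definition tensor :: "nat \<Rightarrow> qop \<Rightarrow> nat \<Rightarrow> qop \<Rightarrow> qop" where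
  "tensor n A m B = (\<lambda>x y. if length x = n + m \<and> length y = n + m
       then A (take n x) (take n y) * B (drop n x) (drop n y) else 0)"

fun tensor_list :: "(nat \<times> qop) list \<Rightarrow> qop" where
  "tensor_list [] = idop 0"
| "tensor_list ((n, A) # rest) = tensor n A (sum_list (map fst rest)) (tensor_list rest)"

text \<open>Reduced state on the j-th factor (0-based) of H^(n_1) x ... x H^(n_r).\<close>
definition red :: "nat list \<Rightarrow> nat \<Rightarrow> qop \<Rightarrow> qop" where
  "red ns j \<rho> = (\<lambda>x y.
     (let off = sum_list (take j ns); k = ns ! j; rest = sum_list (drop (Suc j) ns) in
      if length x = k \<and> length y = k
      then \<Sum>u\<in>bits off. \<Sum>w\<in>bits rest. \<rho> (u @ x @ w) (u @ y @ w)
      else 0))"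

text \<open>A single-qubit operator, indexed by a bit: U a b = <a|U|b>.\<close>
definition unitary1 :: "(bool \<Rightarrow> bool \<Rightarrow> complex) \<Rightarrow> bool" where
  "unitary1 U \<longleftrightarrow>
     (\<forall>a b. (\<Sum>c\<in>UNIV. cnj (U c a) * U c b) = (if a = b then 1 else 0)) \<and>
     (\<forall>a b. (\<Sum>c\<in>UNIV. U a c * cnj (U b c)) = (if a = b then 1 else 0))"

definition tpow :: "nat \<Rightarrow> (bool \<Rightarrow> bool \<Rightarrow> complex) \<Rightarrow> qop" where
  "tpow n T = (\<lambda>x y. if length x = n \<and> length y = n
       then (\<Prod>i<n. T (x ! i) (y ! i)) else 0)"

text \<open>The T-projection onto span of T^(n)|x_1..x_n> with x_n = b.\<close>
definition projT :: "(bool \<Rightarrow> bool \<Rightarrow> complex) \<Rightarrow> nat \<Rightarrow> bool \<Rightarrow> qop" where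
  "projT T n b = (\<lambda>x y. \<Sum>z\<in>{z\<in>bits n. last z = b}. tpow n T x z * cnj (tpow n T y z))"

text \<open>Probability value p_T(rho) = tr(P_1 rho) (real part; it is real for qumixes).\<close>
definition probT :: "(bool \<Rightarrow> bool \<Rightarrow> complex) \<Rightarrow> nat \<Rightarrow> qop \<Rightarrow> real" where
  "probT T n \<rho> = Re (qtrace n (mmult n (projT T n True) \<rho>))"

definition preceqT :: "(bool \<Rightarrow> bool \<Rightarrow> complex) \<Rightarrow> nat \<Rightarrow> qop \<Rightarrow> qop \<Rightarrow> bool" where
  "preceqT T n \<rho> \<sigma> \<longleftrightarrow> probT T n \<rho> \<le> probT T n \<sigma>"

text \<open>A gate on H^(n) acting by x_1..x_{n-1} fixed and the last qubit mapped to
  sum_b (amp y b)|b>, where y is the input basis string.\<close>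
definition lastgate :: "nat \<Rightarrow> (bool list \<Rightarrow> bool \<Rightarrow> complex) \<Rightarrow> qop" where
  "lastgate n amp = (\<lambda>x y. if length x = n \<and> length y = n \<and> butlast x = butlast y
       then amp y (last x) else 0)"

definition NOTg :: "nat \<Rightarrow> qop" where
  "NOTg n = lastgate n (\<lambda>y b. if b = (\<not> last y) then 1 else 0)"

definition SqrtIg :: "nat \<Rightarrow> qop" where
  "SqrtIg n = lastgate n (\<lambda>y b.
     if b = last y then (if last y then - complex_of_real (1 / sqrt 2) else complex_of_real (1 / sqrt 2))
     else complex_of_real (1 / sqrt 2))"

definition SqrtNOTg :: "nat \<Rightarrow> qop" where
  "SqrtNOTg n = lastgate n (\<lambda>y b. if b = last y then (1 - \<i>) / 2 else (1 + \<i>) / 2)"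

definition XORg :: "nat \<Rightarrow> nat \<Rightarrow> qop" where
  "XORg m n = lastgate (m + n) (\<lambda>y b. if b = (y ! (m - 1) \<noteq> last y) then 1 else 0)"

definition Toffg :: "nat \<Rightarrow> nat \<Rightarrow> nat \<Rightarrow> qop" where
  "Toffg m n p = lastgate (m + n + p)
     (\<lambda>y b. if b = ((y ! (m - 1) \<and> y ! (m + n - 1)) \<noteq> last y) then 1 else 0)"

definition gateT :: "(bool \<Rightarrow> bool \<Rightarrow> complex) \<Rightarrow> nat \<Rightarrow> qop \<Rightarrow> qop" where
  "gateT T n G = mmult n (mmult n (tpow n T) G) (adj (tpow n T))"

definition applyD :: "nat \<Rightarrow> qop \<Rightarrow> qop \<Rightarrow> qop" where
  "applyD n G \<rho> = mmult n (mmult n G \<rho>) (adj G)"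

datatype form =
    Atom nat
  | Tt
  | Ff
  | Neg form
  | SqId form
  | SqNeg form
  | Xr form form
  | Tf form form form

definition And :: "form \<Rightarrow> form \<Rightarrow> form" where
  "And a b = Tf a b Ff"

definition Or :: "form \<Rightarrow> form \<Rightarrow> form" where
  "Or a b = Neg (And (Neg a) (Neg b))"

fun atomic :: "form \<Rightarrow> bool" where
  "atomic (Atom _) = True"
| "atomic Tt = True"
| "atomic Ff = True"
| "atomic _ = False"

fun At :: "form \<Rightarrow> nat" where
  "At (Atom _) = 1"
| "At Tt = 1"
| "At Ff = 1"
| "At (Neg a) = At a"
| "At (SqId a) = At a"
| "At (SqNeg a) = At a"
| "At (Xr a b) = At a + At b"
| "At (Tf a b c) = At a + At b + At c"

fun expand :: "form \<Rightarrow> form list" where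
  "expand (Neg a) = [a]"
| "expand (SqId a) = [a]"
| "expand (SqNeg a) = [a]"
| "expand (Xr a b) = [a, b]"
| "expand (Tf a b c) = [a, b, c]"
| "expand a = [a]"

text \<open>level a i is Level_{i+1}^a of the paper (0-based).\<close>
fun level :: "form \<Rightarrow> nat \<Rightarrow> form list" where
  "level a 0 = [a]"
| "level a (Suc i) = concat (map expand (level a i))"

text \<open>depth a = h - 1, where h is the height (number of levels) of the tree of a.\<close>
fun depth :: "form \<Rightarrow> nat" where
  "depth (Neg a) = Suc (depth a)"
| "depth (SqId a) = Suc (depth a)"
| "depth (SqNeg a) = Suc (depth a)"
| "depth (Xr a b) = Suc (max (depth a) (depth b))"
| "depth (Tf a b c) = Suc (max (depth a) (max (depth b) (depth c)))"
| "depth _ = 0"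

fun nodegate :: "(bool \<Rightarrow> bool \<Rightarrow> complex) \<Rightarrow> form \<Rightarrow> qop" where
  "nodegate T (Neg a) = gateT T (At a) (NOTg (At a))"
| "nodegate T (SqId a) = gateT T (At a) (SqrtIg (At a))"
| "nodegate T (SqNeg a) = gateT T (At a) (SqrtNOTg (At a))"
| "nodegate T (Xr a b) = gateT T (At a + At b) (XORg (At a) (At b))"
| "nodegate T (Tf a b c) = gateT T (At a + At b + At c) (Toffg (At a) (At b) (At c))"
| "nodegate T _ = idop 1"

text \<open>The T-gate G^a_{T(i+1)} of the tree of a (levels 0-based).\<close>
definition levelgate :: "(bool \<Rightarrow> bool \<Rightarrow> complex) \<Rightarrow> form \<Rightarrow> nat \<Rightarrow> qop" where
  "levelgate T a i = tensor_list (map (\<lambda>b. (At b, nodegate T b)) (level a i))"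

definition occurrence :: "form \<Rightarrow> form \<Rightarrow> nat \<Rightarrow> nat \<Rightarrow> bool" where
  "occurrence g b i j \<longleftrightarrow> i \<le> depth g \<and> j < length (level g i) \<and> level g i ! j = b"

text \<open>b is a subformula of g (g counts as a subformula of itself).\<close>
definition subformula :: "form \<Rightarrow> form \<Rightarrow> bool" where
  "subformula b g \<longleftrightarrow> (\<exists>i j. occurrence g b i j)"

definition ctxmean :: "(form \<Rightarrow> nat \<Rightarrow> qop) \<Rightarrow> form \<Rightarrow> nat \<Rightarrow> nat \<Rightarrow> qop" where
  "ctxmean Hol g i j = red (map At (level g i)) j (Hol g i)"

definition holistic :: "(bool \<Rightarrow> bool \<Rightarrow> complex) \<Rightarrow> (form \<Rightarrow> nat \<Rightarrow> qop) \<Rightarrow> bool" where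
  "holistic T Hol \<longleftrightarrow>
     (\<forall>g i. i \<le> depth g \<longrightarrow> density (At g) (Hol g i)) \<and>
     (\<forall>g i. i < depth g \<longrightarrow>
        Hol g i = applyD (At g) (levelgate T g i) (Hol g (Suc i))) \<and>
     (\<forall>g i j i' j'. occurrence g (level g i ! j) i j \<and> occurrence g (level g i ! j) i' j' \<longrightarrow>
        ctxmean Hol g i j = ctxmean Hol g i' j') \<and>
     (\<forall>g i j. occurrence g Ff i j \<longrightarrow> ctxmean Hol g i j = projT T 1 False) \<and>
     (\<forall>g i j. occurrence g Tt i j \<longrightarrow> ctxmean Hol g i j = projT T 1 True)"

text \<open>Hol^g(b): the (well-defined, by normality) contextual meaning of b in g.\<close>
definition holmean :: "(form \<Rightarrow> nat \<Rightarrow> qop) \<Rightarrow> form \<Rightarrow> form \<Rightarrow> qop" where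
  "holmean Hol g b = (SOME \<rho>. \<exists>i j. occurrence g b i j \<and> \<rho> = ctxmean Hol g i j)"

definition consequence :: "form \<Rightarrow> form \<Rightarrow> bool" (infix "\<Turnstile>" 50) where
  "a \<Turnstile> b \<longleftrightarrow>
     (\<forall>T. unitary1 T \<longrightarrow> (\<forall>g. subformula a g \<and> subformula b g \<longrightarrow>
        (\<forall>Hol. holistic T Hol \<longrightarrow>
           probT T (At a) (holmean Hol g a) \<le> probT T (At b) (holmean Hol g b))))"

definition equivalent :: "form \<Rightarrow> form \<Rightarrow> bool" (infix "\<equiv>\<^sub>f" 50) where
  "a \<equiv>\<^sub>f b \<longleftrightarrow> a \<Turnstile> b \<and> b \<Turnstile> a"

end

theory Submission
  imports Defs
begin

text \<open>All gates are unitary, so tracing out the other factors of a level undoes their action: the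
  contextual meaning of an occurrence of a negation or a conjunction is the corresponding gate applied
  to the joint state of its arguments one level further down. Seen in the basis of the truth
  perspective, NOT and the Toffoli gate are controlled negations of the last qubit, so they only
  permute the weights of the basis states. Hence the probability of a negation is one minus that of
  its argument, which gives (3) and (4). In a conjunction the third argument f carries no weight on 1,
  so the Toffoli output is 1 only where both other arguments are, which bounds the probability of the
  conjunction by that of each conjunct and gives (1) and (2). Finally (5) holds because probabilities
  lie between p(f) = 0 and p(t) = 1.\<close>

section \<open>Sums over bit strings\<close>

lemma finite_bits [simp]: "finite (bits n)"
proof -
  have "bits n = {xs. set xs \<subseteq> UNIV \<and> length xs = n}" by (auto simp: bits_def)
  then show ?thesis using finite_lists_length_eq[of "UNIV :: bool set" n] by simp
qed

lemma mem_bits [simp]: "x \<in> bits n \<longleftrightarrow> length x = n"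
  by (simp add: bits_def)

lemma bits_0 [simp]: "bits 0 = {[]}"
  by (auto simp: bits_def)

lemma bits_Suc_0: "bits (Suc 0) = (\<lambda>c. [c]) ` UNIV"
  by (auto simp: bits_def length_Suc_conv)

lemma sum_bits_append: "(\<Sum>v\<in>bits (a + b). f v) = (\<Sum>u\<in>bits a. \<Sum>w\<in>bits b. f (u @ w))"
proof -
  have bij: "bij_betw (\<lambda>(u, w). u @ w) (bits a \<times> bits b) (bits (a + b))"
  proof (rule bij_betw_byWitness[where f' = "\<lambda>v. (take a v, drop a v)"])
  qed auto
  show ?thesis
    by (simp add: sum.reindex_bij_betw[OF bij, symmetric] sum.cartesian_product split_def)
qed

lemma sum_bits_append3:
  "(\<Sum>v\<in>bits (a + k + c). f v) = (\<Sum>u\<in>bits a. \<Sum>x\<in>bits k. \<Sum>w\<in>bits c. f (u @ x @ w))"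
  by (simp add: sum_bits_append add.assoc)

lemma sum_bits_Suc: "(\<Sum>v\<in>bits (Suc n). f v) = (\<Sum>c\<in>UNIV. \<Sum>w\<in>bits n. f (c # w))"
  using sum_bits_append[of f 1 n] by (simp add: bits_Suc_0 sum.reindex inj_on_def)

lemma sum_bits_snoc: "(\<Sum>v\<in>bits (Suc n). f v) = (\<Sum>p\<in>bits n. \<Sum>c\<in>UNIV. f (p @ [c]))"
  using sum_bits_append[of f n 1] by (simp add: bits_Suc_0 sum.reindex inj_on_def)

lemma sum_bits_prod:
  "(\<Sum>z\<in>bits n. \<Prod>i<n. f i (z ! i)) = (\<Prod>i<n. \<Sum>c\<in>UNIV. f i c :: complex)"
proof (induction n arbitrary: f)
  case (Suc n)
  have "(\<Sum>z\<in>bits (Suc n). \<Prod>i<Suc n. f i (z ! i))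
      = (\<Sum>c\<in>UNIV. f 0 c * (\<Sum>w\<in>bits n. \<Prod>i<n. f (Suc i) (w ! i)))"
    by (simp only: sum_bits_Suc prod.lessThan_Suc_shift) (simp add: sum_distrib_left)
  also have "\<dots> = (\<Prod>i<Suc n. \<Sum>c\<in>UNIV. f i c)"
    by (simp only: Suc.IH[of "\<lambda>i. f (Suc i)"] prod.lessThan_Suc_shift sum_distrib_right)
  finally show ?case .
qed simp

section \<open>Unitary operators\<close>

definition supported :: "nat \<Rightarrow> qop \<Rightarrow> bool" where
  "supported n A \<longleftrightarrow> (\<forall>x y. length x \<noteq> n \<or> length y \<noteq> n \<longrightarrow> A x y = 0)"

text \<open>Only U\<dagger> U = I is required: in finite dimension this already makes U unitary.\<close>
definition unitary_op :: "nat \<Rightarrow> qop \<Rightarrow> bool" where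
  "unitary_op n U \<longleftrightarrow> supported n U \<and> mmult n (adj U) U = idop n"

lemma supported_mmult [simp]: "supported n A \<Longrightarrow> supported n B \<Longrightarrow> supported n (mmult n A B)"
  by (auto simp: supported_def mmult_def)

lemma supported_adj [simp]: "supported n A \<Longrightarrow> supported n (adj A)"
  by (auto simp: supported_def adj_def)

lemma supported_idop [simp]: "supported n (idop n)"
  by (auto simp: supported_def idop_def)

lemma supported_tpow [simp]: "supported n (tpow n T)"
  by (auto simp: supported_def tpow_def)

lemma supported_lastgate [simp]: "supported n (lastgate n amp)"
  by (auto simp: supported_def lastgate_def)

lemma supported_gateT [simp]: "supported n (gateT T n G)"
  by (auto simp: supported_def gateT_def mmult_def adj_def tpow_def)

lemma supported_tensor [simp]: "supported (n + m) (tensor n A m B)"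
  by (auto simp: supported_def tensor_def)

lemma supported_tensor_list [simp]: "supported (sum_list (map fst L)) (tensor_list L)"
  by (cases L) (auto simp: split_def)

lemma density_supported: "density n \<rho> \<Longrightarrow> supported n \<rho>"
  by (simp add: density_def supported_def)

lemma supported_eqI:
  assumes "supported n A" "supported n B" "\<And>x y. length x = n \<Longrightarrow> length y = n \<Longrightarrow> A x y = B x y"
  shows "A = B"
proof (intro ext)
  fix x y
  show "A x y = B x y"
    using assms unfolding supported_def by (cases "length x = n \<and> length y = n") auto
qed

lemma mmult_assoc: "mmult n (mmult n A B) C = mmult n A (mmult n B C)"
  unfolding mmult_def
  by (auto simp: sum_distrib_left sum_distrib_right mult.assoc intro!: ext sum.swap[THEN trans])

lemma adj_adj [simp]: "adj (adj A) = A"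
  by (simp add: adj_def)

lemma adj_mmult: "adj (mmult n A B) = mmult n (adj B) (adj A)"
  by (auto simp: mmult_def adj_def mult.commute intro!: ext)

lemma adj_idop [simp]: "adj (idop n) = idop n"
  by (auto simp: adj_def idop_def intro!: ext)

lemma idop_mmult: "supported n A \<Longrightarrow> mmult n (idop n) A = A"
proof (intro ext)
  fix x y assume A: "supported n A"
  show "mmult n (idop n) A x y = A x y"
  proof (cases "length x = n")
    case True
    then have "mmult n (idop n) A x y = (\<Sum>z\<in>bits n. if z = x then A z y else 0)"
      unfolding mmult_def idop_def by (intro sum.cong) auto
    then show ?thesis using True by (simp add: sum.delta)
  qed (use A in \<open>simp add: mmult_def idop_def supported_def\<close>)
qed

lemma mmult_cancel_left: "mmult n A B = idop n \<Longrightarrow> supported n C \<Longrightarrow> mmult n A (mmult n B C) = C"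
  by (simp add: mmult_assoc[symmetric] idop_mmult)

lemma applyD_applyD: "applyD n X (applyD n Y \<rho>) = applyD n (mmult n X Y) \<rho>"
  by (simp add: applyD_def adj_mmult mmult_assoc)

lemma applyD_entry: "applyD n G \<rho> x y = (\<Sum>p\<in>bits n. \<Sum>q\<in>bits n. G x p * \<rho> p q * cnj (G y q))"
  unfolding applyD_def mmult_def adj_def by (subst sum.swap) (simp add: sum_distrib_right)

lemma unitary_op_columns:
  assumes "unitary_op n U" "length p = n" "length q = n"
  shows "(\<Sum>u\<in>bits n. U u p * cnj (U u q)) = (if p = q then 1 else 0)"
proof -
  have "mmult n (adj U) U q p = idop n q p" using assms(1) by (simp add: unitary_op_def)
  then show ?thesis using assms(2,3) by (auto simp: mmult_def adj_def idop_def mult.commute)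
qed

lemma unitary_op_sum_conj:
  assumes U: "unitary_op n U"
  shows "(\<Sum>u\<in>bits n. \<Sum>p\<in>bits n. \<Sum>q\<in>bits n. U u p * cnj (U u q) * f p q) = (\<Sum>p\<in>bits n. f p p)"
proof -
  have "(\<Sum>u\<in>bits n. \<Sum>p\<in>bits n. \<Sum>q\<in>bits n. U u p * cnj (U u q) * f p q)
      = (\<Sum>p\<in>bits n. \<Sum>u\<in>bits n. \<Sum>q\<in>bits n. U u p * cnj (U u q) * f p q)"
    by (rule sum.swap)
  also have "\<dots> = (\<Sum>p\<in>bits n. \<Sum>q\<in>bits n. (\<Sum>u\<in>bits n. U u p * cnj (U u q)) * f p q)"
    by (intro sum.cong refl trans[OF sum.swap]) (simp add: sum_distrib_right)
  also have "\<dots> = (\<Sum>p\<in>bits n. \<Sum>q\<in>bits n. if p = q then f p q else 0)"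
    by (intro sum.cong refl) (simp add: unitary_op_columns[OF U])
  finally show ?thesis by (simp add: sum.delta)
qed

lemma mmult_tpow:
  "mmult n (tpow n S) (tpow n R) = tpow n (\<lambda>a b. \<Sum>c\<in>UNIV. S a c * R c b)"
proof (intro ext)
  fix x y
  show "mmult n (tpow n S) (tpow n R) x y = tpow n (\<lambda>a b. \<Sum>c\<in>UNIV. S a c * R c b) x y"
  proof (cases "length x = n \<and> length y = n")
    case True
    then have "mmult n (tpow n S) (tpow n R) x y
        = (\<Sum>z\<in>bits n. \<Prod>i<n. S (x ! i) (z ! i) * R (z ! i) (y ! i))"
      unfolding mmult_def tpow_def by (intro sum.cong) (auto simp: prod.distrib)
    then show ?thesis
      using True sum_bits_prod[of "\<lambda>i c. S (x ! i) c * R c (y ! i)" n] by (simp add: tpow_def)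
  qed (auto simp: mmult_def tpow_def)
qed

lemma adj_tpow: "adj (tpow n T) = tpow n (\<lambda>a b. cnj (T b a))"
  by (auto simp: adj_def tpow_def intro!: ext)

lemma tpow_delta: "tpow n (\<lambda>a b. if a = b then 1 else 0) = idop n"
proof (intro ext)
  fix x y
  show "tpow n (\<lambda>a b. if a = b then 1 else 0) x y = idop n x y"
  proof (cases "length x = n \<and> length y = n \<and> x \<noteq> y")
    case True
    then have "\<exists>i<n. x ! i \<noteq> y ! i" using nth_equalityI by force
    then obtain i where "i < n" "x ! i \<noteq> y ! i" by blast
    then show ?thesis using True by (auto simp: tpow_def idop_def intro: prod_zero)
  qed (auto simp: tpow_def idop_def)
qed

lemma
  assumes "unitary1 T"
  shows adj_tpow_mmult_tpow: "mmult n (adj (tpow n T)) (tpow n T) = idop n"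
    and tpow_mmult_adj_tpow: "mmult n (tpow n T) (adj (tpow n T)) = idop n"
proof -
  have "(\<lambda>a b. \<Sum>c\<in>UNIV. cnj (T c a) * T c b) = (\<lambda>a b. if a = b then 1 else 0)"
    and "(\<lambda>a b. \<Sum>c\<in>UNIV. T a c * cnj (T b c)) = (\<lambda>a b. if a = b then 1 else 0)"
    using assms by (auto simp: unitary1_def)
  then show "mmult n (adj (tpow n T)) (tpow n T) = idop n"
    and "mmult n (tpow n T) (adj (tpow n T)) = idop n"
    by (simp_all add: adj_tpow mmult_tpow tpow_delta)
qed

lemma unitary_op_adj_tpow: "unitary1 T \<Longrightarrow> unitary_op n (adj (tpow n T))"
  by (simp add: unitary_op_def tpow_mmult_adj_tpow)

lemma unitary_op_gateT:
  assumes T: "unitary1 T" and G: "unitary_op n G"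
  shows "unitary_op n (gateT T n G)"
proof -
  have "mmult n (adj (gateT T n G)) (gateT T n G)
      = mmult n (tpow n T) (mmult n (adj G) (mmult n (adj (tpow n T))
          (mmult n (tpow n T) (mmult n G (adj (tpow n T))))))"
    by (simp add: gateT_def adj_mmult mmult_assoc)
  also have "\<dots> = idop n"
    using G by (simp add: unitary_op_def mmult_cancel_left adj_tpow_mmult_tpow[OF T]
        tpow_mmult_adj_tpow[OF T])
  finally show ?thesis by (simp add: unitary_op_def)
qed

lemma tensor_mmult:
  "mmult (n + m) (tensor n A m B) (tensor n C m D) = tensor n (mmult n A C) m (mmult m B D)"
proof (intro ext)
  fix x y
  show "mmult (n + m) (tensor n A m B) (tensor n C m D) x y = tensor n (mmult n A C) m (mmult m B D) x y"
  proof (cases "length x = n + m \<and> length y = n + m")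
    case True
    then show ?thesis
      by (simp add: mmult_def sum_bits_append tensor_def sum_product mult_ac)
  qed (auto simp: mmult_def tensor_def)
qed

lemma adj_tensor: "adj (tensor n A m B) = tensor n (adj A) m (adj B)"
  by (auto simp: adj_def tensor_def intro!: ext)

lemma tensor_idop: "tensor n (idop n) m (idop m) = idop (n + m)"
proof (intro ext)
  fix x y :: "bool list"
  have "length x = n + m \<Longrightarrow> length y = n + m \<Longrightarrow>
      (take n x = take n y \<and> drop n x = drop n y) = (x = y)"
    by (metis append_take_drop_id)
  then show "tensor n (idop n) m (idop m) x y = idop (n + m) x y"
    by (auto simp: tensor_def idop_def)
qed

lemma prod_lessThan_add: "(\<Prod>i<n + (m::nat). f i) = (\<Prod>i<n. f i) * (\<Prod>i<m. f (n + i) :: 'a::comm_monoid_mult)"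
  by (induction m) (simp_all add: mult.assoc)

lemma tpow_add: "tpow (n + m) T = tensor n (tpow n T) m (tpow m T)"
  by (auto simp: tpow_def tensor_def prod_lessThan_add nth_drop intro!: ext)

lemma unitary_op_tensor: "unitary_op n A \<Longrightarrow> unitary_op m B \<Longrightarrow> unitary_op (n + m) (tensor n A m B)"
  by (simp add: unitary_op_def adj_tensor tensor_mmult tensor_idop)

lemma unitary_op_tensor_list:
  "\<forall>(n, U)\<in>set L. unitary_op n U \<Longrightarrow> unitary_op (sum_list (map fst L)) (tensor_list L)"
proof (induction L)
  case Nil
  then show ?case by (simp add: unitary_op_def idop_mmult)
next
  case (Cons p L)
  then show ?case by (cases p) (simp add: unitary_op_tensor)
qed

lemma unitary_op_lastgate:
  assumes n: "0 < n"
    and orth: "\<And>y y'. length y = n \<Longrightarrow> length y' = n \<Longrightarrow> butlast y = butlast y' \<Longrightarrow>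
      (\<Sum>b\<in>UNIV. cnj (amp y b) * amp y' b) = (if y = y' then 1 else 0)"
  shows "unitary_op n (lastgate n amp)"
proof -
  have "mmult n (adj (lastgate n amp)) (lastgate n amp) y y' = idop n y y'"
    if y: "length y = n" "length y' = n" for y y'
  proof -
    obtain m where m: "n = Suc m" using n by (cases n) auto
    have entry: "lastgate n amp (p @ [b]) z = (if p = butlast z then amp z b else 0)"
      if "length p = m" "length z = n" for p b z
      using that m by (simp add: lastgate_def)
    have "mmult n (adj (lastgate n amp)) (lastgate n amp) y y'
        = (\<Sum>p\<in>bits m. \<Sum>b\<in>UNIV. cnj (lastgate n amp (p @ [b]) y) * lastgate n amp (p @ [b]) y')"
      unfolding mmult_def adj_def m by (rule sum_bits_snoc)
    also have "\<dots> = (\<Sum>p\<in>bits m. if p = butlast y \<and> p = butlast y'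
                        then \<Sum>b\<in>UNIV. cnj (amp y b) * amp y' b else 0)"
      using y by (intro sum.cong refl) (auto simp: entry UNIV_bool)
    also have "\<dots> = idop n y y'"
    proof (cases "butlast y = butlast y'")
      case True
      then show ?thesis using y m orth[OF y True] by (simp add: sum.delta idop_def)
    next
      case False
      then have "y \<noteq> y'" by auto
      then show ?thesis using False by (auto simp: idop_def intro!: sum.neutral)
    qed
    finally show ?thesis .
  qed
  then have "mmult n (adj (lastgate n amp)) (lastgate n amp) = idop n"
    by (intro supported_eqI[where n = n]) simp_all
  then show ?thesis by (simp add: unitary_op_def)
qed

lemma butlast_last_eq_iff:
  "y \<noteq> [] \<Longrightarrow> y' \<noteq> [] \<Longrightarrow> butlast y = butlast y' \<Longrightarrow> y = y' \<longleftrightarrow> last y = last y'"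
  by (metis append_butlast_last_id)

lemma unitary_op_lastgate_qubit:
  assumes n: "0 < n"
    and M: "\<And>c c'. (\<Sum>b\<in>UNIV. cnj (M c b) * M c' b) = (if c = c' then 1 else 0)"
  shows "unitary_op n (lastgate n (\<lambda>y b. M (last y) b))"
proof (rule unitary_op_lastgate[OF n])
  fix y y' :: "bool list"
  assume "length y = n" "length y' = n" "butlast y = butlast y'"
  then have "y = y' \<longleftrightarrow> last y = last y'" using n by (intro butlast_last_eq_iff) auto
  then show "(\<Sum>b\<in>UNIV. cnj (M (last y) b) * M (last y') b) = (if y = y' then 1 else 0)"
    by (simp add: M)
qed

lemma unitary_op_SqrtIg: "0 < n \<Longrightarrow> unitary_op n (SqrtIg n)"
proof -
  define r where "r = complex_of_real (1 / sqrt 2)"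
  have rr: "cnj r * r = 1 / 2"
    unfolding r_def by (simp flip: of_real_mult)
  assume "0 < n"
  then show ?thesis
    unfolding SqrtIg_def r_def[symmetric]
    by (intro unitary_op_lastgate_qubit[where M = "\<lambda>c b. if b = c then if c then - r else r else r"])
      (auto simp: UNIV_bool rr)
qed

lemma unitary_op_SqrtNOTg: "0 < n \<Longrightarrow> unitary_op n (SqrtNOTg n)"
  unfolding SqrtNOTg_def
  by (intro unitary_op_lastgate_qubit[where M = "\<lambda>c b. if b = c then (1 - \<i>) / 2 else (1 + \<i>) / 2"])
    (auto simp: UNIV_bool complex_eq_iff)

definition ignores_last :: "nat \<Rightarrow> (bool list \<Rightarrow> bool) \<Rightarrow> bool" where
  "ignores_last n H \<longleftrightarrow>
     (\<forall>y y'. length y = n \<longrightarrow> length y' = n \<longrightarrow> butlast y = butlast y' \<longrightarrow> H y = H y')"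

definition controlled_not :: "nat \<Rightarrow> (bool list \<Rightarrow> bool) \<Rightarrow> qop" where
  "controlled_not n H = lastgate n (\<lambda>y b. if b = (H y \<noteq> last y) then 1 else 0)"

definition flip_last :: "(bool list \<Rightarrow> bool) \<Rightarrow> bool list \<Rightarrow> bool list" where
  "flip_last H z = butlast z @ [H z \<noteq> last z]"

lemma NOTg_eq_controlled_not: "NOTg n = controlled_not n (\<lambda>_. True)"
  by (simp add: NOTg_def controlled_not_def)

lemma XORg_eq_controlled_not: "XORg m n = controlled_not (m + n) (\<lambda>y. y ! (m - 1))"
  by (simp add: XORg_def controlled_not_def)

lemma Toffg_eq_controlled_not:
  "Toffg m n p = controlled_not (m + n + p) (\<lambda>y. y ! (m - 1) \<and> y ! (m + n - 1))"
  by (simp add: Toffg_def controlled_not_def)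

lemma supported_controlled_not [simp]: "supported n (controlled_not n H)"
  by (simp add: controlled_not_def)

lemma ignores_last_const: "ignores_last n (\<lambda>_. c)"
  by (simp add: ignores_last_def)

lemma ignores_last_nth: "i < n - 1 \<Longrightarrow> ignores_last n (\<lambda>y. y ! i)"
  unfolding ignores_last_def by (metis length_butlast nth_butlast)

lemma ignores_last_conj: "ignores_last n H \<Longrightarrow> ignores_last n K \<Longrightarrow> ignores_last n (\<lambda>y. H y \<and> K y)"
  unfolding ignores_last_def by metis

lemma
  assumes n: "0 < n" and H: "ignores_last n H" and z: "length z = n"
  shows length_flip_last: "length (flip_last H z) = n"
    and butlast_flip_last: "butlast (flip_last H z) = butlast z"
    and last_flip_last: "last (flip_last H z) = (H z \<noteq> last z)"
    and control_flip_last: "H (flip_last H z) = H z"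
    and flip_last_flip_last: "flip_last H (flip_last H z) = z"
proof -
  show l: "length (flip_last H z) = n" and b: "butlast (flip_last H z) = butlast z"
    and "last (flip_last H z) = (H z \<noteq> last z)"
    using n z by (simp_all add: flip_last_def)
  show h: "H (flip_last H z) = H z" using H l z b unfolding ignores_last_def by blast
  have "z \<noteq> []" using n z by auto
  then show "flip_last H (flip_last H z) = z" using h by (cases "H z") (simp_all add: flip_last_def)
qed

lemma controlled_not_entry:
  assumes n: "0 < n" and H: "ignores_last n H" and z: "length z = n" and p: "length p = n"
  shows "controlled_not n H z p = (if p = flip_last H z then 1 else 0)"
proof -
  have entry: "controlled_not n H z p
      = (if butlast z = butlast p then if last z = (H p \<noteq> last p) then 1 else 0 else 0)"
    using z p by (simp add: controlled_not_def lastgate_def)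
  have iff: "butlast z = butlast p \<and> last z = (H p \<noteq> last p) \<longleftrightarrow> p = flip_last H z"
  proof
    assume zp: "butlast z = butlast p \<and> last z = (H p \<noteq> last p)"
    then have "H z = H p" using H z p unfolding ignores_last_def by blast
    then have "flip_last H z = butlast p @ [last p]" using zp by (auto simp: flip_last_def)
    moreover have "p \<noteq> []" using n p by auto
    ultimately show "p = flip_last H z" by simp
  next
    assume "p = flip_last H z"
    then show "butlast z = butlast p \<and> last z = (H p \<noteq> last p)"
      using butlast_flip_last[OF n H z] last_flip_last[OF n H z] control_flip_last[OF n H z]
      by auto
  qed
  show ?thesis
    unfolding entry if_if_eq_conj iff ..
qed

lemma unitary_op_controlled_not:
  assumes n: "0 < n" and H: "ignores_last n H"
  shows "unitary_op n (controlled_not n H)"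
  unfolding controlled_not_def
proof (rule unitary_op_lastgate[OF n])
  fix y y' :: "bool list"
  assume y: "length y = n" "length y' = n" "butlast y = butlast y'"
  then have "H y = H y'" using H unfolding ignores_last_def by blast
  moreover have "y = y' \<longleftrightarrow> last y = last y'" using y n by (intro butlast_last_eq_iff) auto
  ultimately show "(\<Sum>b\<in>UNIV. cnj (if b = (H y \<noteq> last y) then 1 else 0) *
      (if b = (H y' \<noteq> last y') then 1 else 0)) = (if y = y' then 1 else (0::complex))"
    by (auto simp: UNIV_bool)
qed

lemma applyD_controlled_not_diag:
  assumes n: "0 < n" and H: "ignores_last n H" and z: "length z = n"
  shows "applyD n (controlled_not n H) X z z = X (flip_last H z) (flip_last H z)"
proof -
  have "flip_last H z \<in> bits n" using length_flip_last[OF n H z] by simp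
  then show ?thesis
    by (simp add: applyD_entry controlled_not_entry[OF n H z] if_distrib[of cnj]
        if_distrib[of "\<lambda>t. t * _"] if_distrib[of "\<lambda>t. _ * t"] sum.delta' cong: if_cong)
qed

lemma At_pos: "0 < At a"
  by (induction a) auto

lemma unitary_op_nodegate:
  assumes T: "unitary1 T"
  shows "unitary_op (At a) (nodegate T a)"
proof (cases a)
  case (Neg b)
  then show ?thesis
    using At_pos[of b] by (simp add: T NOTg_eq_controlled_not unitary_op_gateT
        unitary_op_controlled_not ignores_last_const)
next
  case (SqId b)
  then show ?thesis using At_pos[of b] by (simp add: T unitary_op_gateT unitary_op_SqrtIg)
next
  case (SqNeg b)
  then show ?thesis using At_pos[of b] by (simp add: T unitary_op_gateT unitary_op_SqrtNOTg)
next
  case (Xr b c)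
  have "unitary_op (At b + At c) (XORg (At b) (At c))"
    using At_pos[of b] At_pos[of c]
    by (simp add: XORg_eq_controlled_not unitary_op_controlled_not ignores_last_nth)
  then show ?thesis using Xr by (simp add: T unitary_op_gateT)
next
  case (Tf b c d)
  have "unitary_op (At b + At c + At d) (Toffg (At b) (At c) (At d))"
    using At_pos[of b] At_pos[of c] At_pos[of d]
    by (simp add: Toffg_eq_controlled_not unitary_op_controlled_not ignores_last_nth
        ignores_last_conj)
  then show ?thesis using Tf by (simp add: T unitary_op_gateT)
qed (simp_all add: unitary_op_def idop_mmult)

section \<open>Partial traces\<close>

definition ptrace :: "nat \<Rightarrow> nat \<Rightarrow> nat \<Rightarrow> qop \<Rightarrow> qop" where
  "ptrace a k c \<rho> = (\<lambda>x y. if length x = k \<and> length y = k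
      then \<Sum>u\<in>bits a. \<Sum>w\<in>bits c. \<rho> (u @ x @ w) (u @ y @ w) else 0)"

lemma red_eq_ptrace:
  "red ns j \<rho> = ptrace (sum_list (take j ns)) (ns ! j) (sum_list (drop (Suc j) ns)) \<rho>"
  by (simp add: red_def ptrace_def Let_def)

lemma supported_ptrace [simp]: "supported k (ptrace a k c \<rho>)"
  by (simp add: supported_def ptrace_def)

lemma ptrace_ptrace: "ptrace b k c (ptrace a (b + k + c) d \<rho>) = ptrace (a + b) k (c + d) \<rho>"
proof (rule supported_eqI[where n = k])
  fix x y :: "bool list" assume "length x = k" "length y = k"
  then have "ptrace b k c (ptrace a (b + k + c) d \<rho>) x y =
     (\<Sum>u'\<in>bits b. \<Sum>w'\<in>bits c. \<Sum>u\<in>bits a. \<Sum>w\<in>bits d. \<rho> (u @ u' @ x @ w' @ w) (u @ u' @ y @ w' @ w))"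
    by (simp add: ptrace_def)
  also have "\<dots> = (\<Sum>u\<in>bits a. \<Sum>u'\<in>bits b. \<Sum>w'\<in>bits c. \<Sum>w\<in>bits d.
      \<rho> (u @ u' @ x @ w' @ w) (u @ u' @ y @ w' @ w))"
    by (rule trans[OF sum.cong[OF refl sum.swap] sum.swap])
  also have "\<dots> = ptrace (a + b) k (c + d) \<rho> x y"
    using \<open>length x = k\<close> \<open>length y = k\<close> by (simp add: ptrace_def sum_bits_append)
  finally show "ptrace b k c (ptrace a (b + k + c) d \<rho>) x y = ptrace (a + b) k (c + d) \<rho> x y" .
qed simp_all

lemma sum_swap_pairs:
  "(\<Sum>a\<in>A. \<Sum>b\<in>B. \<Sum>c\<in>C. \<Sum>d\<in>D. f a b c d) = (\<Sum>c\<in>C. \<Sum>d\<in>D. \<Sum>a\<in>A. \<Sum>b\<in>B. f a b c d)"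
proof -
  have "(\<Sum>a\<in>A. \<Sum>b\<in>B. \<Sum>c\<in>C. \<Sum>d\<in>D. f a b c d) = (\<Sum>a\<in>A. \<Sum>c\<in>C. \<Sum>b\<in>B. \<Sum>d\<in>D. f a b c d)"
    by (intro sum.cong refl sum.swap)
  also have "\<dots> = (\<Sum>c\<in>C. \<Sum>a\<in>A. \<Sum>d\<in>D. \<Sum>b\<in>B. f a b c d)"
    by (subst sum.swap) (intro sum.cong refl sum.swap)
  also have "\<dots> = (\<Sum>c\<in>C. \<Sum>d\<in>D. \<Sum>a\<in>A. \<Sum>b\<in>B. f a b c d)"
    by (intro sum.cong refl sum.swap)
  finally show ?thesis .
qed

lemma applyD_tensor_entry:
  assumes "length x1 = n" "length y1 = n" "length x2 = m" "length y2 = m"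
  shows "applyD (n + m) (tensor n A m B) \<rho> (x1 @ x2) (y1 @ y2)
    = (\<Sum>p1\<in>bits n. \<Sum>q1\<in>bits n. \<Sum>p2\<in>bits m. \<Sum>q2\<in>bits m.
         A x1 p1 * cnj (A y1 q1) * (B x2 p2 * cnj (B y2 q2) * \<rho> (p1 @ p2) (q1 @ q2)))"
proof -
  have "applyD (n + m) (tensor n A m B) \<rho> (x1 @ x2) (y1 @ y2)
    = (\<Sum>p1\<in>bits n. \<Sum>p2\<in>bits m. \<Sum>q1\<in>bits n. \<Sum>q2\<in>bits m.
         A x1 p1 * cnj (A y1 q1) * (B x2 p2 * cnj (B y2 q2) * \<rho> (p1 @ p2) (q1 @ q2)))"
    using assms by (simp add: applyD_entry sum_bits_append tensor_def mult_ac)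
  then show ?thesis by (simp add: sum.swap[of _ "bits m" "bits n"])
qed

lemma ptrace_applyD_tensor_left:
  assumes A: "unitary_op a A" and B: "supported n B"
  shows "ptrace a n 0 (applyD (a + n) (tensor a A n B) \<rho>) = applyD n B (ptrace a n 0 \<rho>)"
proof (rule supported_eqI[where n = n])
  show "supported n (applyD n B (ptrace a n 0 \<rho>))" using B by (simp add: applyD_def)
  fix x y :: "bool list" assume x: "length x = n" and y: "length y = n"
  let ?F = "\<lambda>p1 q1. \<Sum>p2\<in>bits n. \<Sum>q2\<in>bits n. B x p2 * cnj (B y q2) * \<rho> (p1 @ p2) (q1 @ q2)"
  have "ptrace a n 0 (applyD (a + n) (tensor a A n B) \<rho>) x y
      = (\<Sum>u\<in>bits a. \<Sum>p1\<in>bits a. \<Sum>q1\<in>bits a. A u p1 * cnj (A u q1) * ?F p1 q1)"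
    using x y by (simp add: ptrace_def applyD_tensor_entry sum_distrib_left)
  also have "\<dots> = (\<Sum>p1\<in>bits a. ?F p1 p1)"
    by (rule unitary_op_sum_conj[OF A])
  also have "\<dots> = applyD n B (ptrace a n 0 \<rho>) x y"
    using x y by (simp add: applyD_entry ptrace_def sum_distrib_left sum_distrib_right
        sum.swap[of _ "bits a"] mult_ac)
  finally show "ptrace a n 0 (applyD (a + n) (tensor a A n B) \<rho>) x y = applyD n B (ptrace a n 0 \<rho>) x y" .
qed simp

lemma ptrace_applyD_tensor_right:
  assumes C: "unitary_op c C" and G: "supported k G"
  shows "ptrace 0 k c (applyD (k + c) (tensor k G c C) \<rho>) = applyD k G (ptrace 0 k c \<rho>)"
proof (rule supported_eqI[where n = k])
  show "supported k (applyD k G (ptrace 0 k c \<rho>))" using G by (simp add: applyD_def)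
  fix x y :: "bool list" assume x: "length x = k" and y: "length y = k"
  let ?F = "\<lambda>p2 q2. \<Sum>p1\<in>bits k. \<Sum>q1\<in>bits k. G x p1 * cnj (G y q1) * \<rho> (p1 @ p2) (q1 @ q2)"
  have "ptrace 0 k c (applyD (k + c) (tensor k G c C) \<rho>) x y
      = (\<Sum>w\<in>bits c. \<Sum>p1\<in>bits k. \<Sum>q1\<in>bits k. \<Sum>p2\<in>bits c. \<Sum>q2\<in>bits c.
          C w p2 * cnj (C w q2) * (G x p1 * cnj (G y q1) * \<rho> (p1 @ p2) (q1 @ q2)))"
    using x y by (simp add: ptrace_def applyD_tensor_entry mult_ac)
  also have "\<dots> = (\<Sum>w\<in>bits c. \<Sum>p2\<in>bits c. \<Sum>q2\<in>bits c. C w p2 * cnj (C w q2) * ?F p2 q2)"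
    by (simp add: sum_swap_pairs[of _ "bits k"] sum_distrib_left)
  also have "\<dots> = (\<Sum>p2\<in>bits c. ?F p2 p2)"
    by (rule unitary_op_sum_conj[OF C])
  also have "\<dots> = (\<Sum>p1\<in>bits k. \<Sum>q1\<in>bits k. \<Sum>p2\<in>bits c.
      G x p1 * cnj (G y q1) * \<rho> (p1 @ p2) (q1 @ p2))"
    by (rule trans[OF sum.swap sum.cong[OF refl sum.swap]])
  also have "\<dots> = applyD k G (ptrace 0 k c \<rho>) x y"
    using x y by (simp add: applyD_entry ptrace_def sum_distrib_left sum_distrib_right mult_ac)
  finally show "ptrace 0 k c (applyD (k + c) (tensor k G c C) \<rho>) x y = applyD k G (ptrace 0 k c \<rho>) x y" .
qed simp

lemma ptrace_applyD_tensor_list: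
  assumes pre: "\<forall>(n, U)\<in>set pre. unitary_op n U" and post: "\<forall>(n, U)\<in>set post. unitary_op n U"
    and G: "supported k G"
  defines "L \<equiv> pre @ (k, G) # post"
  shows "ptrace (sum_list (map fst pre)) k (sum_list (map fst post))
           (applyD (sum_list (map fst L)) (tensor_list L) \<rho>)
         = applyD k G (ptrace (sum_list (map fst pre)) k (sum_list (map fst post)) \<rho>)"
  unfolding L_def using pre
proof (induction pre arbitrary: \<rho>)
  case Nil
  have "unitary_op (sum_list (map fst post)) (tensor_list post)"
    using post by (rule unitary_op_tensor_list)
  then show ?case using G by (simp add: ptrace_applyD_tensor_right)
next
  case (Cons p pre)
  obtain d A where p: "p = (d, A)" by (cases p)
  let ?b = "sum_list (map fst pre)" and ?c = "sum_list (map fst post)"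
  let ?B = "tensor_list (pre @ (k, G) # post)"
  have A: "unitary_op d A" using Cons.prems p by simp
  have B: "supported (?b + k + ?c) ?B"
    using supported_tensor_list[of "pre @ (k, G) # post"] by (simp add: add.assoc)
  have "ptrace (d + ?b) k ?c (applyD (d + (?b + k + ?c)) (tensor d A (?b + k + ?c) ?B) \<rho>)
      = ptrace ?b k ?c (ptrace d (?b + k + ?c) 0
          (applyD (d + (?b + k + ?c)) (tensor d A (?b + k + ?c) ?B) \<rho>))"
    by (simp add: ptrace_ptrace)
  also have "\<dots> = ptrace ?b k ?c (applyD (?b + k + ?c) ?B (ptrace d (?b + k + ?c) 0 \<rho>))"
    using A B by (simp add: ptrace_applyD_tensor_left)
  also have "\<dots> = applyD k G (ptrace ?b k ?c (ptrace d (?b + k + ?c) 0 \<rho>))"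
    using Cons.IH Cons.prems by (simp add: add.assoc)
  also have "\<dots> = applyD k G (ptrace (d + ?b) k ?c \<rho>)"
    by (simp add: ptrace_ptrace)
  finally show ?case using p by (simp add: add.assoc)
qed

section \<open>Weights in the basis of a truth perspective\<close>

text \<open>The weight <z| T^(n)\<dagger> \<sigma> T^(n) |z> of the basis state T^(n)|z> in \<sigma>.\<close>
definition tweight :: "(bool \<Rightarrow> bool \<Rightarrow> complex) \<Rightarrow> nat \<Rightarrow> qop \<Rightarrow> bool list \<Rightarrow> real" where
  "tweight T n \<sigma> z = Re (applyD n (adj (tpow n T)) \<sigma> z z)"

definition tweight_distribution :: "(bool \<Rightarrow> bool \<Rightarrow> complex) \<Rightarrow> nat \<Rightarrow> qop \<Rightarrow> bool" where
  "tweight_distribution T n \<sigma> \<longleftrightarrow> (\<forall>z. 0 \<le> tweight T n \<sigma> z) \<and> (\<Sum>z\<in>bits n. tweight T n \<sigma> z) = 1"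

lemma tweight_entry:
  "tweight T n \<sigma> z = Re (\<Sum>p\<in>bits n. \<Sum>q\<in>bits n. cnj (tpow n T p z) * \<sigma> p q * tpow n T q z)"
  by (simp add: tweight_def applyD_entry adj_def)

lemma tweight_eq_0: "length z \<noteq> n \<Longrightarrow> tweight T n \<sigma> z = 0"
  by (simp add: tweight_entry tpow_def)

lemma probT_eq_sum_tweight: "probT T n \<sigma> = (\<Sum>z\<in>bits n. if last z then tweight T n \<sigma> z else 0)"
proof -
  let ?S = "{z\<in>bits n. last z}"
  have "qtrace n (mmult n (projT T n True) \<sigma>)
      = (\<Sum>q\<in>bits n. \<Sum>p\<in>bits n. \<Sum>z\<in>?S. cnj (tpow n T p z) * \<sigma> p q * tpow n T q z)"
    by (simp add: qtrace_def mmult_def projT_def sum_distrib_left sum_distrib_right mult_ac)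
  also have "\<dots> = (\<Sum>z\<in>?S. \<Sum>q\<in>bits n. \<Sum>p\<in>bits n. cnj (tpow n T p z) * \<sigma> p q * tpow n T q z)"
    by (rule trans[OF sum.cong[OF refl sum.swap] sum.swap])
  also have "\<dots> = (\<Sum>z\<in>?S. \<Sum>p\<in>bits n. \<Sum>q\<in>bits n. cnj (tpow n T p z) * \<sigma> p q * tpow n T q z)"
    by (intro sum.cong refl sum.swap)
  finally have "probT T n \<sigma> = (\<Sum>z\<in>?S. tweight T n \<sigma> z)"
    by (simp only: probT_def tweight_entry Re_sum)
  then show ?thesis by (simp only: sum.inter_filter[OF finite_bits])
qed

lemma ptrace_split: "ptrace 0 k c (ptrace a (k + c) 0 \<rho>) = ptrace a k c \<rho>"
  using ptrace_ptrace[of 0 k c a 0 \<rho>] by simp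

lemma tweight_ptrace:
  assumes T: "unitary1 T" and y: "length y = k"
  shows "tweight T k (ptrace a k c \<rho>) y = (\<Sum>u\<in>bits a. \<Sum>w\<in>bits c. tweight T (a + k + c) \<rho> (u @ y @ w))"
proof -
  have "ptrace a k c (applyD (a + k + c) (adj (tpow (a + k + c) T)) \<rho>)
      = ptrace 0 k c (ptrace a (k + c) 0 (applyD (a + (k + c))
          (tensor a (adj (tpow a T)) (k + c) (tensor k (adj (tpow k T)) c (adj (tpow c T)))) \<rho>))"
    by (simp add: ptrace_split tpow_add adj_tensor add.assoc)
  also have "\<dots> = ptrace 0 k c (applyD (k + c) (tensor k (adj (tpow k T)) c (adj (tpow c T)))
                    (ptrace a (k + c) 0 \<rho>))"
    by (simp add: ptrace_applyD_tensor_left unitary_op_adj_tpow[OF T])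
  also have "\<dots> = applyD k (adj (tpow k T)) (ptrace a k c \<rho>)"
    by (simp add: ptrace_applyD_tensor_right unitary_op_adj_tpow[OF T] ptrace_split)
  finally have "applyD k (adj (tpow k T)) (ptrace a k c \<rho>)
      = ptrace a k c (applyD (a + k + c) (adj (tpow (a + k + c) T)) \<rho>)" ..
  then show ?thesis
    using y by (simp add: tweight_def ptrace_def Re_sum)
qed

lemma tweight_nonneg:
  assumes "density n \<sigma>"
  shows "0 \<le> tweight T n \<sigma> z"
proof -
  have "0 \<le> Re (\<Sum>p\<in>bits n. \<Sum>q\<in>bits n. cnj (v p) * \<sigma> p q * v q)" for v
    using assms unfolding density_def by blast
  from this[of "\<lambda>p. tpow n T p z"] show ?thesis by (simp add: tweight_entry)
qed

lemma qtrace_mmult_commute: "qtrace n (mmult n A B) = qtrace n (mmult n B A)"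
  unfolding qtrace_def mmult_def by (rule trans[OF sum.swap]) (simp add: mult.commute)

lemma sum_tweight:
  assumes T: "unitary1 T" and \<sigma>: "supported n \<sigma>"
  shows "(\<Sum>z\<in>bits n. tweight T n \<sigma> z) = Re (qtrace n \<sigma>)"
proof -
  have "qtrace n (mmult n (mmult n (adj (tpow n T)) \<sigma>) (tpow n T))
      = qtrace n (mmult n (tpow n T) (mmult n (adj (tpow n T)) \<sigma>))"
    by (rule qtrace_mmult_commute)
  also have "\<dots> = qtrace n \<sigma>" using \<sigma> by (simp add: mmult_cancel_left tpow_mmult_adj_tpow[OF T])
  finally have "Re (\<Sum>z\<in>bits n. applyD n (adj (tpow n T)) \<sigma> z z) = Re (qtrace n \<sigma>)"
    by (simp add: qtrace_def applyD_def)
  then show ?thesis by (simp add: tweight_def Re_sum)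
qed

lemma density_tweight_distribution: "unitary1 T \<Longrightarrow> density n \<sigma> \<Longrightarrow> tweight_distribution T n \<sigma>"
  by (simp add: tweight_distribution_def tweight_nonneg sum_tweight density_supported)
    (simp add: density_def)

lemma tweight_distribution_ptrace:
  assumes T: "unitary1 T" and \<rho>: "tweight_distribution T (a + k + c) \<rho>"
  shows "tweight_distribution T k (ptrace a k c \<rho>)"
proof -
  have "0 \<le> tweight T k (ptrace a k c \<rho>) y" for y
    using \<rho> by (cases "length y = k")
      (simp_all add: tweight_ptrace[OF T] tweight_distribution_def tweight_eq_0 sum_nonneg)
  moreover have "(\<Sum>y\<in>bits k. tweight T k (ptrace a k c \<rho>) y) = 1"
    using \<rho> by (simp add: tweight_ptrace[OF T] tweight_distribution_def sum_bits_append3 sum.swap[of _ "bits k"])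
  ultimately show ?thesis by (simp add: tweight_distribution_def)
qed

lemma nth_append_middle: "length u = a \<Longrightarrow> i < length y \<Longrightarrow> (u @ y @ w) ! (a + i) = y ! i"
  by (simp add: nth_append)

lemma probT_ptrace:
  assumes T: "unitary1 T" and k: "0 < k" and M: "a + k + c = M"
  shows "probT T k (ptrace a k c \<rho>) = (\<Sum>v\<in>bits M. if v ! (a + k - 1) then tweight T M \<rho> v else 0)"
proof -
  have mid: "(u @ y @ w) ! (a + k - 1) = last y" if "length u = a" "length y = k" for u y w :: "bool list"
  proof -
    have "y \<noteq> []" using that k by auto
    then show ?thesis using nth_append_middle[of u a "k - 1" y w] that k by (simp add: last_conv_nth)
  qed
  have "probT T k (ptrace a k c \<rho>)
      = (\<Sum>y\<in>bits k. \<Sum>u\<in>bits a. \<Sum>w\<in>bits c. if last y then tweight T (a + k + c) \<rho> (u @ y @ w) else 0)"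
    unfolding probT_eq_sum_tweight by (intro sum.cong refl) (auto simp: tweight_ptrace[OF T])
  also have "\<dots> = (\<Sum>u\<in>bits a. \<Sum>y\<in>bits k. \<Sum>w\<in>bits c.
      if (u @ y @ w) ! (a + k - 1) then tweight T (a + k + c) \<rho> (u @ y @ w) else 0)"
    by (rule trans[OF sum.swap]) (intro sum.cong refl, simp only: mid mem_bits)
  finally show ?thesis unfolding M[symmetric] by (simp only: sum_bits_append3)
qed

lemma tweight_applyD_gateT:
  assumes T: "unitary1 T" and G: "supported n G"
  shows "tweight T n (applyD n (gateT T n G) \<sigma>) z = Re (applyD n G (applyD n (adj (tpow n T)) \<sigma>) z z)"
proof -
  have "mmult n (adj (tpow n T)) (gateT T n G) = mmult n G (adj (tpow n T))"
    using G by (simp add: gateT_def mmult_assoc mmult_cancel_left adj_tpow_mmult_tpow[OF T])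
  then show ?thesis by (simp add: tweight_def applyD_applyD)
qed

lemma sum_bits_flip_last:
  assumes n: "0 < n" and H: "ignores_last n H"
  shows "(\<Sum>z\<in>bits n. f (flip_last H z)) = (\<Sum>z\<in>bits n. f z)"
  by (rule sum.reindex_bij_witness[of _ "flip_last H" "flip_last H"])
    (simp_all add: length_flip_last[OF n H] flip_last_flip_last[OF n H])

text \<open>A controlled-not only permutes the T-basis, so it moves weight from z to its flip.\<close>
lemma probT_applyD_controlled_not:
  assumes T: "unitary1 T" and n: "0 < n" and H: "ignores_last n H"
  shows "probT T n (applyD n (gateT T n (controlled_not n H)) \<sigma>)
    = (\<Sum>z\<in>bits n. if H z \<noteq> last z then tweight T n \<sigma> z else 0)"
proof -
  let ?f = "\<lambda>z. if last (flip_last H z) then tweight T n \<sigma> z else 0"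
  have "probT T n (applyD n (gateT T n (controlled_not n H)) \<sigma>) = (\<Sum>z\<in>bits n. ?f (flip_last H z))"
    unfolding probT_eq_sum_tweight
    by (intro sum.cong refl) (simp add: tweight_applyD_gateT[OF T] applyD_controlled_not_diag[OF n H]
        flip_last_flip_last[OF n H] tweight_def[symmetric])
  also have "\<dots> = (\<Sum>z\<in>bits n. ?f z)"
    by (rule sum_bits_flip_last[OF n H])
  also have "\<dots> = (\<Sum>z\<in>bits n. if H z \<noteq> last z then tweight T n \<sigma> z else 0)"
    by (intro sum.cong refl) (simp add: last_flip_last[OF n H])
  finally show ?thesis .
qed

lemma probT_bounds:
  assumes "tweight_distribution T n \<sigma>"
  shows "0 \<le> probT T n \<sigma>" and "probT T n \<sigma> \<le> 1"
proof -
  have w: "\<And>z. 0 \<le> tweight T n \<sigma> z" "(\<Sum>z\<in>bits n. tweight T n \<sigma> z) = 1"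
    using assms by (simp_all add: tweight_distribution_def)
  show "0 \<le> probT T n \<sigma>"
    unfolding probT_eq_sum_tweight using w by (intro sum_nonneg) simp
  have "probT T n \<sigma> \<le> (\<Sum>z\<in>bits n. tweight T n \<sigma> z)"
    unfolding probT_eq_sum_tweight using w by (intro sum_mono) simp
  then show "probT T n \<sigma> \<le> 1" using w by simp
qed

lemma probT_applyD_NOTg:
  assumes T: "unitary1 T" and n: "0 < n" and \<sigma>: "tweight_distribution T n \<sigma>"
  shows "probT T n (applyD n (gateT T n (NOTg n)) \<sigma>) = 1 - probT T n \<sigma>"
proof -
  have "probT T n (applyD n (gateT T n (NOTg n)) \<sigma>) + probT T n \<sigma>
      = (\<Sum>z\<in>bits n. (if \<not> last z then tweight T n \<sigma> z else 0) + (if last z then tweight T n \<sigma> z else 0))"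
    using probT_applyD_controlled_not[OF T n ignores_last_const[of n True]]
    by (simp add: NOTg_eq_controlled_not probT_eq_sum_tweight sum.distrib)
  also have "\<dots> = (\<Sum>z\<in>bits n. tweight T n \<sigma> z)"
    by (intro sum.cong refl) simp
  finally show ?thesis using \<sigma> by (simp add: tweight_distribution_def)
qed

lemma tweight_projT:
  assumes T: "unitary1 T" and z: "length z = n"
  shows "tweight T n (projT T n b) z = (if last z = b then 1 else 0)"
proof -
  let ?S = "{z'\<in>bits n. last z' = b}"
  have col: "(\<Sum>p\<in>bits n. cnj (tpow n T p x) * tpow n T p y) = (if x = y then 1 else 0)"
    if "length x = n" "length y = n" for x y
    using fun_cong[OF fun_cong[OF adj_tpow_mmult_tpow[OF T, of n]], of x y] that
    by (simp add: mmult_def adj_def idop_def)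
  have "applyD n (adj (tpow n T)) (projT T n b) z z
      = (\<Sum>p\<in>bits n. \<Sum>q\<in>bits n. \<Sum>z'\<in>?S.
          (cnj (tpow n T p z) * tpow n T p z') * (cnj (tpow n T q z') * tpow n T q z))"
    unfolding applyD_entry projT_def adj_def by (simp add: sum_distrib_left sum_distrib_right mult_ac)
  also have "\<dots> = (\<Sum>z'\<in>?S. \<Sum>p\<in>bits n. \<Sum>q\<in>bits n.
          (cnj (tpow n T p z) * tpow n T p z') * (cnj (tpow n T q z') * tpow n T q z))"
    by (rule trans[OF sum.cong[OF refl sum.swap] sum.swap])
  also have "\<dots> = (\<Sum>z'\<in>?S. (\<Sum>p\<in>bits n. cnj (tpow n T p z) * tpow n T p z')
                  * (\<Sum>q\<in>bits n. cnj (tpow n T q z') * tpow n T q z))"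
    by (simp add: sum_product)
  also have "\<dots> = (\<Sum>z'\<in>?S. if z = z' then 1 else 0)"
    using z by (intro sum.cong refl) (auto simp: col)
  also have "\<dots> = (if last z = b then 1 else 0)"
  proof -
    have "finite ?S" by (rule finite_subset[OF _ finite_bits]) blast
    then show ?thesis using z by (simp only: sum.delta') simp
  qed
  finally show ?thesis by (simp add: tweight_def)
qed

lemma probT_projT: "unitary1 T \<Longrightarrow> probT T 1 (projT T 1 b) = (if b then 1 else 0)"
  by (simp add: probT_eq_sum_tweight bits_Suc_0 UNIV_bool tweight_projT)

text \<open>Once the target qubit carries no weight on 1, the output of the Toffoli gate is 1 only where
  both controls are, so its probability is dominated by that of either control.\<close>
lemma probT_applyD_Toffg_le:
  fixes \<sigma> :: qop
  assumes T: "unitary1 T" and ka: "0 < ka" and kb: "0 < kb"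
    and \<sigma>: "tweight_distribution T (ka + kb + 1) \<sigma>"
    and target: "probT T 1 (ptrace (ka + kb) 1 0 \<sigma>) = 0"
  defines "P \<equiv> probT T (ka + kb + 1) (applyD (ka + kb + 1) (gateT T (ka + kb + 1) (Toffg ka kb 1)) \<sigma>)"
  shows "P \<le> probT T ka (ptrace 0 ka (kb + 1) \<sigma>)" and "P \<le> probT T kb (ptrace ka kb 1 \<sigma>)"
proof -
  let ?N = "ka + kb + 1" and ?W = "tweight T (ka + kb + 1) \<sigma>"
  let ?H = "\<lambda>v. v ! (ka - 1) \<and> v ! (ka + kb - 1)"
  have W: "0 \<le> ?W v" for v using \<sigma> by (simp add: tweight_distribution_def)
  have last_nth: "v ! (ka + kb) = last v" if "length v = ka + kb + 1" for v
    using that by (cases v rule: rev_cases) (auto simp: nth_append)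
  have "(\<Sum>v\<in>bits ?N. if last v then ?W v else 0) = 0"
    using target probT_ptrace[OF T, of 1 "ka + kb" 0 ?N] by (simp add: last_nth)
  then have off: "?W v = 0" if "v \<in> bits ?N" "last v" for v
    using that W by (subst (asm) sum_nonneg_eq_0_iff) (auto split: if_splits)
  have P: "P = (\<Sum>v\<in>bits ?N. if ?H v \<noteq> last v then ?W v else 0)"
    unfolding P_def Toffg_eq_controlled_not using ka kb
    by (intro probT_applyD_controlled_not[OF T]) (simp_all add: ignores_last_conj ignores_last_nth)
  have le: "P \<le> (\<Sum>v\<in>bits ?N. if Q v then ?W v else 0)" if Q: "\<And>v. ?H v \<Longrightarrow> Q v" for Q
    unfolding P using W off Q by (intro sum_mono) auto
  show "P \<le> probT T ka (ptrace 0 ka (kb + 1) \<sigma>)"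
    using le[of "\<lambda>v. v ! (ka - 1)"] probT_ptrace[OF T ka, of 0 "kb + 1" ?N] by simp
  show "P \<le> probT T kb (ptrace ka kb 1 \<sigma>)"
    using le[of "\<lambda>v. v ! (ka + kb - 1)"] probT_ptrace[OF T kb, of ka 1 ?N] by simp
qed

section \<open>Contextual meanings along the syntactical tree\<close>

lemma sum_At_expand: "sum_list (map At (expand b)) = At b"
  by (cases b) auto

lemma sum_At_level: "sum_list (map At (level g i)) = At g"
proof (induction i)
  case (Suc i)
  have "sum_list (map At (concat (map expand L))) = sum_list (map At L)" for L
    by (induction L) (simp_all add: sum_At_expand)
  then show ?case using Suc by simp
qed simp

lemma depth_level: "b \<in> set (level g i) \<Longrightarrow> depth b \<le> depth g - i"
proof (induction i arbitrary: b)
  case (Suc i)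
  then obtain c where "c \<in> set (level g i)" "b \<in> set (expand c)" by auto
  moreover have "b \<in> set (expand c) \<Longrightarrow> depth b \<le> depth c - 1" by (cases c) auto
  ultimately show ?case using Suc.IH by fastforce
qed simp

lemma occurrence_inner_less_depth: "occurrence g b i j \<Longrightarrow> \<not> atomic b \<Longrightarrow> i < depth g"
  using depth_level[of b g i] unfolding occurrence_def
  by (cases b) (auto dest!: nth_mem)

lemma occurrence_At_split:
  assumes "occurrence g b i j"
  shows "sum_list (take j (map At (level g i))) + At b + sum_list (drop (Suc j) (map At (level g i))) = At g"
proof -
  have "map At (level g i) = take j (map At (level g i)) @ At b # drop (Suc j) (map At (level g i))"
    using assms unfolding occurrence_def by (metis id_take_nth_drop length_map nth_map)
  then have "At g = sum_list (take j (map At (level g i)) @ At b # drop (Suc j) (map At (level g i)))"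
    by (metis sum_At_level)
  then show ?thesis by simp
qed

lemma ctxmean_eq_ptrace:
  "occurrence g b i j \<Longrightarrow> ctxmean Hol g i j
     = ptrace (sum_list (take j (map At (level g i)))) (At b) (sum_list (drop (Suc j) (map At (level g i)))) (Hol g i)"
  by (simp add: ctxmean_def red_eq_ptrace occurrence_def)

lemma level_Suc_split:
  assumes "j < length (level g i)" "level g i ! j = b"
  shows "level g (Suc i) = concat (map expand (take j (level g i))) @ expand b
           @ concat (map expand (drop (Suc j) (level g i)))"
proof -
  have "level g i = take j (level g i) @ b # drop (Suc j) (level g i)"
    using assms by (metis id_take_nth_drop)
  then show ?thesis by (metis concat_append concat.simps(2) level.simps(2) map_append list.map(2))
qed

lemma ctxmean_unique:
  "holistic T Hol \<Longrightarrow> occurrence g b i j \<Longrightarrow> occurrence g b i' j' \<Longrightarrow> ctxmean Hol g i j = ctxmean Hol g i' j'"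
  unfolding holistic_def by (metis occurrence_def)

lemma holmean_eq_ctxmean:
  assumes H: "holistic T Hol" and o: "occurrence g b i j"
  shows "holmean Hol g b = ctxmean Hol g i j"
proof -
  have "\<exists>\<rho> i j. occurrence g b i j \<and> \<rho> = ctxmean Hol g i j" using o by blast
  from someI_ex[OF this] obtain i' j' where "occurrence g b i' j'" "holmean Hol g b = ctxmean Hol g i' j'"
    unfolding holmean_def by blast
  then show ?thesis using ctxmean_unique[OF H o] by simp
qed

text \<open>The block of the occurrence (i, j) read one level further down, where the arguments of the
  formula at (i, j) sit side by side.\<close>
definition ctxmean_below :: "(form \<Rightarrow> nat \<Rightarrow> qop) \<Rightarrow> form \<Rightarrow> nat \<Rightarrow> nat \<Rightarrow> qop" where
  "ctxmean_below Hol g i j = red (map At (level g i)) j (Hol g (Suc i))"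

definition child_pos :: "form \<Rightarrow> nat \<Rightarrow> nat \<Rightarrow> nat" where
  "child_pos g i j = length (concat (map expand (take j (level g i))))"

lemma ctxmean_below_eq_ptrace:
  "occurrence g b i j \<Longrightarrow> ctxmean_below Hol g i j
     = ptrace (sum_list (take j (map At (level g i)))) (At b) (sum_list (drop (Suc j) (map At (level g i))))
         (Hol g (Suc i))"
  by (simp add: ctxmean_below_def red_eq_ptrace occurrence_def)

lemma tweight_distribution_ctxmean_below:
  assumes H: "holistic T Hol" and T: "unitary1 T" and o: "occurrence g b i j" and inner: "\<not> atomic b"
  shows "tweight_distribution T (At b) (ctxmean_below Hol g i j)"
proof -
  have "density (At g) (Hol g (Suc i))"
    using H occurrence_inner_less_depth[OF o inner] by (simp add: holistic_def)
  then show ?thesis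
    using occurrence_At_split[OF o] density_tweight_distribution[OF T]
    by (simp add: ctxmean_below_eq_ptrace[OF o] tweight_distribution_ptrace[OF T])
qed

lemma ctxmean_inner:
  assumes H: "holistic T Hol" and T: "unitary1 T" and o: "occurrence g b i j" and inner: "\<not> atomic b"
  shows "ctxmean Hol g i j = applyD (At b) (nodegate T b) (ctxmean_below Hol g i j)"
proof -
  let ?F = "\<lambda>b. (At b, nodegate T b)"
  let ?pre = "map ?F (take j (level g i))" and ?post = "map ?F (drop (Suc j) (level g i))"
  have "level g i = take j (level g i) @ b # drop (Suc j) (level g i)"
    using o unfolding occurrence_def by (metis id_take_nth_drop)
  from arg_cong[OF this, of "map ?F"] have "map ?F (level g i) = ?pre @ (At b, nodegate T b) # ?post"
    by simp
  moreover have "sum_list (map fst (map ?F (level g i))) = At g"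
    by (simp add: comp_def sum_At_level)
  moreover have "Hol g i = applyD (At g) (levelgate T g i) (Hol g (Suc i))"
    using H occurrence_inner_less_depth[OF o inner] by (simp add: holistic_def)
  moreover have "\<forall>(n, U)\<in>set ?pre. unitary_op n U" "\<forall>(n, U)\<in>set ?post. unitary_op n U"
    by (auto simp: unitary_op_nodegate[OF T])
  ultimately show ?thesis
    using ptrace_applyD_tensor_list[where pre = ?pre and post = ?post and G = "nodegate T b"
        and k = "At b" and \<rho> = "Hol g (Suc i)"]
      unitary_op_nodegate[OF T, of b]
    by (simp add: ctxmean_eq_ptrace[OF o] ctxmean_below_eq_ptrace[OF o] levelgate_def unitary_op_def
        take_map drop_map comp_def)
qed

lemma
  assumes o: "occurrence g b i j" and inner: "\<not> atomic b" and c: "c < length (expand b)"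
  shows occurrence_child: "occurrence g (expand b ! c) (Suc i) (child_pos g i j + c)"
    and ctxmean_child: "ctxmean Hol g (Suc i) (child_pos g i j + c)
      = ptrace (sum_list (take c (map At (expand b)))) (At (expand b ! c))
          (sum_list (drop (Suc c) (map At (expand b)))) (ctxmean_below Hol g i j)"
proof -
  let ?X = "concat (map expand (take j (level g i)))"
  let ?Z = "concat (map expand (drop (Suc j) (level g i)))"
  have L: "level g (Suc i) = ?X @ expand b @ ?Z"
    using o by (intro level_Suc_split) (auto simp: occurrence_def)
  have sum_At_concat: "sum_list (map At (concat (map expand xs))) = sum_list (map At xs)" for xs
    by (induction xs) (simp_all add: sum_At_expand)
  show o': "occurrence g (expand b ! c) (Suc i) (child_pos g i j + c)"
    using occurrence_inner_less_depth[OF o inner] c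
    unfolding occurrence_def child_pos_def L by (simp add: nth_append)
  have b: "sum_list (take c (map At (expand b))) + At (expand b ! c) + sum_list (drop (Suc c) (map At (expand b)))
      = At b"
    using c sum_At_expand[of b] by (metis add.assoc id_take_nth_drop length_map nth_map sum_list.Cons
        sum_list_append)
  show "ctxmean Hol g (Suc i) (child_pos g i j + c)
      = ptrace (sum_list (take c (map At (expand b)))) (At (expand b ! c))
          (sum_list (drop (Suc c) (map At (expand b)))) (ctxmean_below Hol g i j)"
    unfolding ctxmean_eq_ptrace[OF o'] ctxmean_below_eq_ptrace[OF o] b[symmetric] ptrace_ptrace
    unfolding L child_pos_def
    using c by (simp add: take_map drop_map sum_At_concat Suc_diff_le add.assoc)
qed

lemma occurrence_arg:
  assumes "occurrence g b i j" "\<not> atomic b" "a \<in> set (expand b)"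
  shows "\<exists>i' j'. occurrence g a i' j'"
  using assms occurrence_child by (metis in_set_conv_nth)

lemma ptrace_0_0: "supported n \<sigma> \<Longrightarrow> ptrace 0 n 0 \<sigma> = \<sigma>"
  using supported_ptrace[of n 0 0 \<sigma>] by (intro supported_eqI[where n = n]) (simp_all add: ptrace_def)

lemma probT_ctxmean_bounds:
  assumes H: "holistic T Hol" and T: "unitary1 T" and o: "occurrence g b i j"
  shows "0 \<le> probT T (At b) (ctxmean Hol g i j)" and "probT T (At b) (ctxmean Hol g i j) \<le> 1"
proof -
  have "density (At g) (Hol g i)" using H o by (simp add: holistic_def occurrence_def)
  then have "tweight_distribution T (At b) (ctxmean Hol g i j)"
    using occurrence_At_split[OF o] density_tweight_distribution[OF T]
    by (simp add: ctxmean_eq_ptrace[OF o] tweight_distribution_ptrace[OF T])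
  then show "0 \<le> probT T (At b) (ctxmean Hol g i j)" "probT T (At b) (ctxmean Hol g i j) \<le> 1"
    by (simp_all add: probT_bounds)
qed

lemma probT_ctxmean_constant:
  assumes H: "holistic T Hol" and T: "unitary1 T"
  shows "occurrence g Ff i j \<Longrightarrow> probT T (At Ff) (ctxmean Hol g i j) = 0"
    and "occurrence g Tt i j \<Longrightarrow> probT T (At Tt) (ctxmean Hol g i j) = 1"
  using H probT_projT[OF T, of False] probT_projT[OF T, of True] by (simp_all add: holistic_def)

lemma probT_ctxmean_Neg:
  assumes H: "holistic T Hol" and T: "unitary1 T"
    and o: "occurrence g (Neg b) i j" and ob: "occurrence g b i' j'"
  shows "probT T (At (Neg b)) (ctxmean Hol g i j) = 1 - probT T (At b) (ctxmean Hol g i' j')"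
proof -
  let ?\<sigma> = "ctxmean_below Hol g i j"
  have "ctxmean Hol g i' j' = ctxmean Hol g (Suc i) (child_pos g i j + 0)"
    using ctxmean_unique[OF H ob] occurrence_child[OF o, of 0] by simp
  also have "\<dots> = ?\<sigma>"
    using ctxmean_child[OF o, of 0 Hol] by (simp add: ctxmean_below_eq_ptrace[OF o] ptrace_0_0)
  finally show ?thesis
    using ctxmean_inner[OF H T o] tweight_distribution_ctxmean_below[OF H T o]
    by (simp add: probT_applyD_NOTg[OF T At_pos])
qed

lemma probT_ctxmean_And:
  assumes H: "holistic T Hol" and T: "unitary1 T" and o: "occurrence g (And a b) i j"
  shows "occurrence g a ia ja \<Longrightarrow> probT T (At (And a b)) (ctxmean Hol g i j) \<le> probT T (At a) (ctxmean Hol g ia ja)"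
    and "occurrence g b ib jb \<Longrightarrow> probT T (At (And a b)) (ctxmean Hol g i j) \<le> probT T (At b) (ctxmean Hol g ib jb)"
proof -
  let ?\<sigma> = "ctxmean_below Hol g i j" and ?k = "child_pos g i j"
  have o': "occurrence g (Tf a b Ff) i j" using o by (simp add: And_def)
  have child: "ctxmean Hol g (Suc i) (?k + c)
      = ptrace (sum_list (take c [At a, At b, 1])) (At ([a, b, Ff] ! c)) (sum_list (drop (Suc c) [At a, At b, 1])) ?\<sigma>"
    if "c < 3" for c
    using ctxmean_child[OF o', of c Hol] that by simp
  have occ: "occurrence g ([a, b, Ff] ! c) (Suc i) (?k + c)" if "c < 3" for c
    using occurrence_child[OF o', of c] that by simp
  have "occurrence g Ff (Suc i) (?k + 2)" using occ[of 2] by simp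
  from probT_ctxmean_constant(1)[OF H T this] have "probT T 1 (ptrace (At a + At b) 1 0 ?\<sigma>) = 0"
    using child[of 2] by simp
  then have le: "probT T (At (And a b)) (ctxmean Hol g i j) \<le> probT T (At a) (ptrace 0 (At a) (At b + 1) ?\<sigma>)"
    "probT T (At (And a b)) (ctxmean Hol g i j) \<le> probT T (At b) (ptrace (At a) (At b) 1 ?\<sigma>)"
    using probT_applyD_Toffg_le[OF T At_pos At_pos, of a b ?\<sigma>] ctxmean_inner[OF H T o']
      tweight_distribution_ctxmean_below[OF H T o']
    by (simp_all add: And_def)
  show "occurrence g a ia ja \<Longrightarrow> probT T (At (And a b)) (ctxmean Hol g i j) \<le> probT T (At a) (ctxmean Hol g ia ja)"
    using le(1) child[of 0] ctxmean_unique[OF H _ occ[of 0]] by simp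
  show "occurrence g b ib jb \<Longrightarrow> probT T (At (And a b)) (ctxmean Hol g i j) \<le> probT T (At b) (ctxmean Hol g ib jb)"
    using le(2) child[of 1] ctxmean_unique[OF H _ occ[of 1]] by simp
qed

lemma consequenceI:
  assumes "\<And>T Hol g i j i' j'. unitary1 T \<Longrightarrow> holistic T Hol \<Longrightarrow> occurrence g a i j \<Longrightarrow>
    occurrence g b i' j' \<Longrightarrow> probT T (At a) (ctxmean Hol g i j) \<le> probT T (At b) (ctxmean Hol g i' j')"
  shows "a \<Turnstile> b"
  unfolding consequence_def subformula_def
proof (intro allI impI, elim conjE exE)
  fix T g Hol i j i' j'
  assume "unitary1 T" "occurrence g a i j" "occurrence g b i' j'" "holistic T Hol"
  then show "probT T (At a) (holmean Hol g a) \<le> probT T (At b) (holmean Hol g b)"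
    using assms by (simp add: holmean_eq_ctxmean)
qed

lemma consequenceD:
  assumes "a \<Turnstile> b" and T: "unitary1 T" and H: "holistic T Hol"
    and oa: "occurrence g a i j" and ob: "occurrence g b i' j'"
  shows "probT T (At a) (ctxmean Hol g i j) \<le> probT T (At b) (ctxmean Hol g i' j')"
proof -
  have "probT T (At a) (holmean Hol g a) \<le> probT T (At b) (holmean Hol g b)"
    using assms unfolding consequence_def subformula_def by blast
  then show ?thesis by (simp add: holmean_eq_ctxmean[OF H oa] holmean_eq_ctxmean[OF H ob])
qed

lemma And_consequence_left: "And a b \<Turnstile> a"
  by (rule consequenceI) (rule probT_ctxmean_And)

lemma And_consequence_right: "And a b \<Turnstile> b"
  by (rule consequenceI) (rule probT_ctxmean_And)

lemma And_consequence: "a \<Turnstile> b \<Longrightarrow> And a d \<Turnstile> b"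
proof (rule consequenceI)
  fix T Hol g i j i' j'
  assume ab: "a \<Turnstile> b" and T: "unitary1 T" and H: "holistic T Hol"
    and o: "occurrence g (And a d) i j" and ob: "occurrence g b i' j'"
  obtain ia ja where oa: "occurrence g a ia ja"
    using occurrence_arg[of g "Tf a d Ff" i j a] o by (auto simp: And_def)
  show "probT T (At (And a d)) (ctxmean Hol g i j) \<le> probT T (At b) (ctxmean Hol g i' j')"
    using probT_ctxmean_And(1)[OF H T o oa] consequenceD[OF ab T H oa ob] by linarith
qed

lemma Neg_Neg_equivalent: "Neg (Neg a) \<equiv>\<^sub>f a"
proof -
  have eq: "probT T (At a) (ctxmean Hol g i j) = probT T (At a) (ctxmean Hol g i' j')"
    if T: "unitary1 T" and H: "holistic T Hol"
      and o: "occurrence g (Neg (Neg a)) i j" and oa: "occurrence g a i' j'" for T Hol g i j i' j'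
  proof -
    obtain i1 j1 where o1: "occurrence g (Neg a) i1 j1"
      using occurrence_arg[OF o] by auto
    show ?thesis
      using probT_ctxmean_Neg[OF H T o o1] probT_ctxmean_Neg[OF H T o1 oa] by simp
  qed
  show ?thesis
    unfolding equivalent_def
    by (intro conjI consequenceI) (simp_all add: eq)
qed

lemma Neg_consequence: "a \<Turnstile> b \<Longrightarrow> Neg b \<Turnstile> Neg a"
proof (rule consequenceI)
  fix T Hol g i j i' j'
  assume ab: "a \<Turnstile> b" and T: "unitary1 T" and H: "holistic T Hol"
    and o: "occurrence g (Neg b) i j" and o': "occurrence g (Neg a) i' j'"
  obtain ib jb where ob: "occurrence g b ib jb" using occurrence_arg[OF o] by auto
  obtain ia ja where oa: "occurrence g a ia ja" using occurrence_arg[OF o'] by auto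
  show "probT T (At (Neg b)) (ctxmean Hol g i j) \<le> probT T (At (Neg a)) (ctxmean Hol g i' j')"
    using probT_ctxmean_Neg[OF H T o ob] probT_ctxmean_Neg[OF H T o' oa] consequenceD[OF ab T H oa ob]
    by simp
qed

lemma Ff_consequence: "Ff \<Turnstile> b"
proof (rule consequenceI)
  fix T Hol g i j i' j'
  assume "unitary1 T" "holistic T Hol" "occurrence g Ff i j" "occurrence g b i' j'"
  then show "probT T (At Ff) (ctxmean Hol g i j) \<le> probT T (At b) (ctxmean Hol g i' j')"
    using probT_ctxmean_constant(1) probT_ctxmean_bounds(1) by metis
qed

lemma consequence_Tt: "b \<Turnstile> Tt"
proof (rule consequenceI)
  fix T Hol g i j i' j'
  assume "unitary1 T" "holistic T Hol" "occurrence g b i j" "occurrence g Tt i' j'"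
  then show "probT T (At b) (ctxmean Hol g i j) \<le> probT T (At Tt) (ctxmean Hol g i' j')"
    using probT_ctxmean_constant(2) probT_ctxmean_bounds(2) by metis
qed

theorem theorem5p1:
  shows "(\<forall>a b. And a b \<Turnstile> a \<and> And a b \<Turnstile> b)
       \<and> (\<forall>a b d. a \<Turnstile> b \<longrightarrow> And a d \<Turnstile> b)
       \<and> (\<forall>a. Neg (Neg a) \<equiv>\<^sub>f a)
       \<and> (\<forall>a b. a \<Turnstile> b \<longrightarrow> Neg b \<Turnstile> Neg a)
       \<and> (\<forall>b. Ff \<Turnstile> b \<and> b \<Turnstile> Tt)"
  by (simp add: And_consequence_left And_consequence_right And_consequence Neg_Neg_equivalent
      Neg_consequence Ff_consequence consequence_Tt)

end
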